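(* Let $m,n$ be nonnegative integers. The graphs $A(m)$ and $A(n)$ are isomorphic as edge-labeled directed graphs if and only if there exists a nonnegative integer $t$ such that $m=2^tn+2^t-1$ or $n=2^tm+2^t-1$.
   Context: A hyperbinary expansion of a nonnegative integer $n$ is a word $x_0\cdots x_k$ over $\{0,1,2\}$ with $x_0\ne0$ and $\sum_i x_i2^{k-i}=n$; the empty word is the unique expansion of $0$. $\mathcal H(n)$ is the set of such expansions. $A(n)$ is the directed graph on $\mathcal H(n)$ with the following labeled arcs, for arbitrary words $\mathbf x,\mathbf y$ whenever both endpoints lie in $\mathcal H(n)$: \begin{itemize} \item an arc labeled $\to$ from $\mathbf x02\mathbf y$ to $\mathbf x10\mathbf y$ and from $2\mathbf y$ to $10\mathbf y$; \item an arc labeled $\twoheadrightarrow$ from $\mathbf x12\mathbf y$ to $\mathbf x20\mathbf y$. \end{itemize} An isomorphism of edge-labeled directed graphs is a bijection $\varphi$ of vertex sets such that $(x,y)$ is an arc with label $\ell$ if and only if $(\varphi(x),\varphi(y))$ is an arc with label $\ell$. *)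

theory Defs
  imports Main
begin

text \<open>Words over the alphabet {0,1,2} are represented as lists of naturals with all entries at most 2.
  The word x_0 ... x_k is the list [x_0, ..., x_k]; its value is sum_i x_i 2^(k-i).\<close>

fun word_val :: "nat list \<Rightarrow> nat" where
  "word_val xs = foldl (\<lambda>a d. 2 * a + d) 0 xs"

definition hyperbinary :: "nat \<Rightarrow> nat list set" where
  "hyperbinary n = {w. (\<forall>d\<in>set w. d \<le> 2) \<and> (w \<noteq> [] \<longrightarrow> hd w \<noteq> 0) \<and> word_val w = n}"

datatype arc_label = Single | Double  (* Single: \<rightarrow>, Double: \<twoheadrightarrow> *)

definition arcA :: "nat \<Rightarrow> arc_label \<Rightarrow> nat list \<Rightarrow> nat list \<Rightarrow> bool" where
  "arcA n l u v \<longleftrightarrow> u \<in> hyperbinary n \<and> v \<in> hyperbinary n \<and>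
     (case l of
        Single \<Rightarrow> (\<exists>x y. u = x @ [0, 2] @ y \<and> v = x @ [1, 0] @ y) \<or>
                  (\<exists>y. u = 2 # y \<and> v = [1, 0] @ y)
      | Double \<Rightarrow> (\<exists>x y. u = x @ [1, 2] @ y \<and> v = x @ [2, 0] @ y))"

definition A_iso :: "nat \<Rightarrow> nat \<Rightarrow> bool" where
  "A_iso m n \<longleftrightarrow> (\<exists>\<phi>. bij_betw \<phi> (hyperbinary m) (hyperbinary n) \<and>
     (\<forall>l. \<forall>u\<in>hyperbinary m. \<forall>v\<in>hyperbinary m. arcA m l u v \<longleftrightarrow> arcA n l (\<phi> u) (\<phi> v)))"

end

theory Submission
  imports Defs
begin

text \<open>
  An expansion w of n is determined by its set of carries: the positions i at which the value
  of the last i digits of w is at least 2^i (it then equals n mod 2^i + 2^i). Digits and carries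
  are linked by d_i + [i \<in> X] = n_i + 2 [i+1 \<in> X], where n_i are the binary digits of n; hence
  the carry sets of the expansions of n are exactly the subsets of {i \<ge> 1. 2^i \<le> n} that
  contain i+1 with every i such that n_i = 0, and i with every i+1 such that n_i = 1. An arc of
  A(n) deletes a single carry i from its source, and its label is \<rightarrow> or \<twoheadrightarrow> according as n_i is
  1 or 0. So A(n) is the covering graph of a distributive lattice of down-sets.

  For even n the vertices with exactly one out-neighbour are the principal down-sets, so an
  isomorphism A(m) \<cong> A(n) of even m, n induces a bijection of positions that preserves the bits
  and the forcing order of the down-sets. The Hasse diagram of this order is the path
  1 - 2 - ... - N, so the bijection is the identity or the reversal; the top bit being 1 on both
  sides, either way it preserves all bits, and m = n. Finally w \<mapsto> w1 is an isomorphism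
  A(n) \<cong> A(2n+1), and every n + 1 is 2^t times an odd number.
\<close>

section \<open>Digits and carries\<close>

declare word_val.simps [simp del]

lemma word_val_Nil [simp]: "word_val [] = 0"
  by (simp add: word_val.simps)

lemma word_val_snoc [simp]: "word_val (w @ [d]) = 2 * word_val w + d"
  by (simp add: word_val.simps)

text \<open>Digits are indexed from the right: digit w j is the coefficient of 2^j.\<close>

definition digit :: "nat list \<Rightarrow> nat \<Rightarrow> nat" where
  "digit w j = (if j < length w then rev w ! j else 0)"

definition low_val :: "nat list \<Rightarrow> nat \<Rightarrow> nat" where
  "low_val w i = (\<Sum>j<i. digit w j * 2^j)"

definition carries :: "nat list \<Rightarrow> nat set" where
  "carries w = {i. 2^i \<le> low_val w i}"

definition positions :: "nat \<Rightarrow> nat set" where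
  "positions n = {i. 1 \<le> i \<and> 2^i \<le> n}"

definition carry_closed :: "nat \<Rightarrow> nat set \<Rightarrow> bool" where
  "carry_closed n X \<longleftrightarrow> X \<subseteq> positions n \<and>
     (\<forall>j. (j \<in> X \<and> \<not> bit n j \<longrightarrow> Suc j \<in> X) \<and> (Suc j \<in> X \<and> bit n j \<longrightarrow> j \<in> X))"

lemma carry_closedD:
  assumes "carry_closed n X"
  shows "X \<subseteq> positions n" "j \<in> X \<Longrightarrow> \<not> bit n j \<Longrightarrow> Suc j \<in> X"
    "Suc j \<in> X \<Longrightarrow> bit n j \<Longrightarrow> j \<in> X"
  using assms unfolding carry_closed_def by blast+

lemma digit_Nil [simp]: "digit [] j = 0"
  by (simp add: digit_def)

lemma digit_snoc_0: "digit (w @ [d]) 0 = d"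
  by (simp add: digit_def)

lemma digit_snoc_Suc: "digit (w @ [d]) (Suc j) = digit w j"
  by (simp add: digit_def)

lemma digit_ge_length: "length w \<le> j \<Longrightarrow> digit w j = 0"
  by (simp add: digit_def)

lemma digit_append:
  "digit (xs @ ys) j = (if j < length ys then digit ys j else digit xs (j - length ys))"
  by (auto simp: digit_def nth_append)

lemma digit_last: "w \<noteq> [] \<Longrightarrow> digit w (length w - 1) = hd w"
  by (simp add: digit_def rev_nth hd_conv_nth)

lemma digit_in_set: "j < length w \<Longrightarrow> digit w j \<in> set w"
  by (simp add: digit_def rev_nth)

lemma digit_le: "\<forall>d\<in>set w. d \<le> b \<Longrightarrow> digit w j \<le> b"
  using digit_in_set[of j w] digit_ge_length[of w j] by (cases "j < length w") auto

lemma set_word_le: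
  assumes "\<And>j. digit w j \<le> b" shows "\<forall>d\<in>set w. d \<le> b"
proof
  fix d assume "d \<in> set w"
  then have "d \<in> set (rev w)" by simp
  then obtain j where "j < length (rev w)" "rev w ! j = d" by (metis in_set_conv_nth)
  then show "d \<le> b" using assms[of j] by (simp add: digit_def)
qed

lemma digit_zeros_append:
  assumes "\<forall>x\<in>set zs. x = 0" shows "digit (zs @ w) j = digit w j"
proof (cases "j < length w")
  case False
  have "digit zs (j - length w) = 0"
    using assms digit_in_set[of "j - length w" zs] digit_ge_length[of zs "j - length w"]
    by (cases "j - length w < length zs") auto
  with False show ?thesis by (simp add: digit_append digit_ge_length)
qed (simp add: digit_append)

lemma digit_Cons_0: "digit (0 # w) = digit w"
  using digit_zeros_append[of "[0]" w] by auto

lemma digit_inj: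
  assumes "u \<noteq> [] \<longrightarrow> hd u \<noteq> 0" and "v \<noteq> [] \<longrightarrow> hd v \<noteq> 0" and "digit u = digit v"
  shows "u = v"
proof -
  have len: "length u = length v"
  proof (rule ccontr)
    assume "length u \<noteq> length v"
    then consider "length u < length v" | "length v < length u" by linarith
    then show False
    proof cases
      case 1
      then have "v \<noteq> []" by auto
      then have "digit v (length v - 1) \<noteq> 0" using assms(2) digit_last[of v] by simp
      moreover have "digit u (length v - 1) = 0" using 1 by (intro digit_ge_length) simp
      ultimately show False using assms(3) by simp
    next
      case 2
      then have "u \<noteq> []" by auto
      then have "digit u (length u - 1) \<noteq> 0" using assms(1) digit_last[of u] by simp
      moreover have "digit v (length u - 1) = 0" using 2 by (intro digit_ge_length) simp
      ultimately show False using assms(3) by simp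
    qed
  qed
  have "rev u = rev v"
  proof (rule nth_equalityI)
    fix j assume "j < length (rev u)"
    then show "rev u ! j = rev v ! j" using fun_cong[OF assms(3), of j] len by (simp add: digit_def)
  qed (simp add: len)
  then show ?thesis by simp
qed

lemma exists_word_with_digits:
  assumes "\<And>j. B \<le> j \<Longrightarrow> d j = 0"
  shows "\<exists>w. digit w = d \<and> (w \<noteq> [] \<longrightarrow> hd w \<noteq> 0) \<and> length w \<le> B"
proof -
  define r where "r = rev (map d [0..<B])"
  define w where "w = dropWhile (\<lambda>x. x = 0) r"
  have "digit r = d"
    using assms by (auto simp: r_def digit_def fun_eq_iff)
  moreover have "digit (takeWhile (\<lambda>x. x = 0) r @ w) = digit w"
    by (rule ext, rule digit_zeros_append) (auto dest: set_takeWhileD)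
  ultimately have "digit w = d"
    by (simp add: w_def)
  moreover have "w \<noteq> [] \<longrightarrow> hd w \<noteq> 0"
    unfolding w_def using hd_dropWhile by blast
  moreover have "length w \<le> B"
    using length_dropWhile_le[of _ r] by (simp add: w_def r_def)
  ultimately show ?thesis by blast
qed

lemma low_val_0 [simp]: "low_val w 0 = 0"
  by (simp add: low_val_def)

lemma low_val_Suc: "low_val w (Suc i) = low_val w i + digit w i * 2^i"
  by (simp add: low_val_def)

lemma low_val_snoc_Suc: "low_val (w @ [d]) (Suc i) = d + 2 * low_val w i"
  by (induction i) (simp_all add: low_val_Suc digit_snoc_0 digit_snoc_Suc algebra_simps)

lemma low_val_cong: "(\<And>j. j < t \<Longrightarrow> digit u j = digit v j) \<Longrightarrow> low_val u t = low_val v t"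
  unfolding low_val_def by (rule sum.cong) auto

lemma low_val_mono: "i \<le> j \<Longrightarrow> low_val w i \<le> low_val w j"
  unfolding low_val_def by (rule sum_mono2) auto

lemma word_val_eq_low_val: "length w \<le> i \<Longrightarrow> word_val w = low_val w i"
proof (induction w arbitrary: i rule: rev_induct)
  case Nil
  then show ?case by (simp add: low_val_def)
next
  case (snoc d w)
  then obtain k where "i = Suc k" "length w \<le> k" by (cases i) auto
  with snoc.IH show ?case by (simp add: low_val_snoc_Suc)
qed

lemma low_val_bound: "\<forall>d\<in>set w. d \<le> 2 \<Longrightarrow> low_val w i + 2 \<le> 2 * 2^i"
proof (induction i)
  case (Suc i)
  have "digit w i * 2^i \<le> 2 * 2^i" using digit_le[OF Suc.prems] by simp
  with Suc show ?case by (simp only: low_val_Suc power_Suc) linarith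
qed simp

lemma low_val_mod: "i \<le> j \<Longrightarrow> low_val w j mod 2^i = low_val w i mod 2^i"
proof (induction j rule: dec_induct)
  case (step k)
  have "(digit w k * 2^k) mod 2^i = 0"
    using step.hyps(1) by (simp add: le_imp_power_dvd)
  then have "low_val w (Suc k) mod 2^i = low_val w k mod 2^i"
    by (simp add: low_val_Suc mod_add_eq[symmetric])
  with step.IH show ?case by simp
qed simp

lemma mod_Suc_bit: "(n::nat) mod 2^(Suc j) = n mod 2^j + of_bool (bit n j) * 2^j"
  using take_bit_Suc_from_most[of j n] by (simp add: take_bit_eq_mod mult.commute)

lemma hyperbinaryD:
  assumes "w \<in> hyperbinary n"
  shows "\<forall>d\<in>set w. d \<le> 2" "w \<noteq> [] \<longrightarrow> hd w \<noteq> 0" "word_val w = n"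
  using assms by (auto simp: hyperbinary_def)

lemma low_val_le: "w \<in> hyperbinary n \<Longrightarrow> low_val w i \<le> n"
  using low_val_mono[of i "max i (length w)" w] word_val_eq_low_val[of w "max i (length w)"]
    hyperbinaryD(3)[of w n] by simp

lemma low_val_carries:
  assumes "w \<in> hyperbinary n"
  shows "low_val w i = n mod 2^i + of_bool (i \<in> carries w) * 2^i"
proof -
  have bound: "low_val w i + 2 \<le> 2 * 2^i"
    by (rule low_val_bound[OF hyperbinaryD(1)[OF assms]])
  have "n = low_val w (max i (length w))"
    using hyperbinaryD(3)[OF assms] word_val_eq_low_val[of w "max i (length w)"] by simp
  then have congr: "low_val w i mod 2^i = n mod 2^i"
    using low_val_mod[of i "max i (length w)" w] by simp
  show ?thesis
  proof (cases "2^i \<le> low_val w i")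
    case True
    then have "low_val w i = (low_val w i - 2^i) + 2^i" by simp
    then have "(low_val w i - 2^i) mod 2^i = low_val w i mod 2^i"
      by (metis mod_add_self2)
    moreover have "low_val w i - 2^i < 2^i" using bound True by linarith
    ultimately have "low_val w i - 2^i = n mod 2^i" using congr by simp
    with True show ?thesis by (simp add: carries_def)
  next
    case False
    with congr show ?thesis by (simp add: carries_def)
  qed
qed

lemma digit_carries:
  assumes "w \<in> hyperbinary n"
  shows "digit w j + of_bool (j \<in> carries w) = of_bool (bit n j) + 2 * of_bool (Suc j \<in> carries w)"
proof -
  have "(digit w j + of_bool (j \<in> carries w)) * 2^j
      = (of_bool (bit n j) + 2 * of_bool (Suc j \<in> carries w)) * (2::nat)^j"
    using low_val_Suc[of w j] low_val_carries[OF assms, of j] low_val_carries[OF assms, of "Suc j"]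
      mod_Suc_bit[of n j] by (simp add: algebra_simps)
  then show ?thesis by simp
qed

lemma low_val_of_digit_carries:
  assumes "\<And>j. digit w j + of_bool (j \<in> X) = of_bool (bit n j) + 2 * of_bool (Suc j \<in> X)"
    and "0 \<notin> X"
  shows "low_val w t = n mod 2^t + of_bool (t \<in> X) * 2^t"
proof (induction t)
  case (Suc t)
  have "low_val w (Suc t) = n mod 2^t + (digit w t + of_bool (t \<in> X)) * 2^t"
    using Suc by (simp add: low_val_Suc algebra_simps)
  also have "\<dots> = n mod 2^Suc t + of_bool (Suc t \<in> X) * 2^Suc t"
    by (simp only: assms(1) mod_Suc_bit) (simp add: algebra_simps)
  finally show ?case .
qed (use assms(2) in simp)

lemma carries_eqI:
  assumes "\<And>t. low_val w t = n mod 2^t + of_bool (t \<in> X) * 2^t"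
  shows "carries w = X"
proof (intro set_eqI)
  fix t
  show "t \<in> carries w \<longleftrightarrow> t \<in> X"
  proof (cases "t \<in> X")
    case False
    then have "low_val w t < 2^t" using assms[of t] by simp
    with False show ?thesis by (simp add: carries_def)
  qed (use assms[of t] in \<open>simp add: carries_def\<close>)
qed

lemma carries_subset_positions:
  assumes "w \<in> hyperbinary n" shows "carries w \<subseteq> positions n"
proof
  fix i assume "i \<in> carries w"
  then have "2^i \<le> low_val w i" by (simp add: carries_def)
  moreover from this have "i \<noteq> 0" by (cases i) auto
  ultimately show "i \<in> positions n" using low_val_le[OF assms, of i] by (simp add: positions_def)
qed

lemma positions_ge_1: "i \<in> positions n \<Longrightarrow> 1 \<le> i"
  by (simp add: positions_def)

lemma finite_positions: "finite (positions n)"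
proof (rule finite_subset)
  show "positions n \<subseteq> {..n}"
  proof
    fix i assume "i \<in> positions n"
    then have "2^i \<le> n" by (simp add: positions_def)
    then have "i \<le> n" using less_exp[of i] by linarith
    then show "i \<in> {..n}" by simp
  qed
qed simp

lemma not_bit_ge: "(n::nat) < 2^j \<Longrightarrow> \<not> bit n j"
  by (simp add: bit_iff_odd)

lemma carry_closed_carries:
  assumes "w \<in> hyperbinary n" shows "carry_closed n (carries w)"
  unfolding carry_closed_def
proof (intro conjI allI impI)
  fix j
  have eq: "digit w j + of_bool (j \<in> carries w) = of_bool (bit n j) + 2 * of_bool (Suc j \<in> carries w)"
    by (rule digit_carries[OF assms])
  have "digit w j \<le> 2" by (rule digit_le[OF hyperbinaryD(1)[OF assms]])
  show "Suc j \<in> carries w" if "j \<in> carries w \<and> \<not> bit n j"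
    using that eq by (cases "Suc j \<in> carries w") auto
  show "j \<in> carries w" if "Suc j \<in> carries w \<and> bit n j"
    using that eq \<open>digit w j \<le> 2\<close> by (cases "j \<in> carries w") auto
qed (rule carries_subset_positions[OF assms])

lemma carries_inj:
  assumes "u \<in> hyperbinary n" "v \<in> hyperbinary n" "carries u = carries v"
  shows "u = v"
proof (rule digit_inj)
  show "digit u = digit v"
  proof
    fix j
    show "digit u j = digit v j"
      using digit_carries[OF assms(1), of j] digit_carries[OF assms(2), of j] assms(3) by simp
  qed
qed (use hyperbinaryD(2) assms in auto)

lemma exists_word_with_carries:
  assumes X: "carry_closed n X"
  shows "\<exists>w\<in>hyperbinary n. carries w = X"
proof -
  note sub = carry_closedD(1)[OF X] and up = carry_closedD(2)[OF X] and down = carry_closedD(3)[OF X]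
  define d :: "nat \<Rightarrow> nat" where "d j = of_bool (bit n j) + 2 * of_bool (Suc j \<in> X) - of_bool (j \<in> X)" for j
  have carry_eq: "d j + of_bool (j \<in> X) = of_bool (bit n j) + 2 * of_bool (Suc j \<in> X)" for j
    using up[of j] unfolding d_def by (cases "j \<in> X"; cases "bit n j"; cases "Suc j \<in> X") auto
  have "d j \<le> 2" for j
    using down[of j] unfolding d_def by (cases "j \<in> X"; cases "bit n j"; cases "Suc j \<in> X") auto
  have big: "n < 2^j" "j \<notin> X" if "Suc n \<le> j" for j
  proof -
    have "(2::nat)^Suc n \<le> 2^j" using that by (rule power_increasing) simp
    then show "n < 2^j" using less_exp[of "Suc n"] by linarith
    then show "j \<notin> X" using sub by (auto simp: positions_def)
  qed
  have "d j = 0" if "Suc n \<le> j" for j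
    using big[OF that] big[of "Suc j"] that not_bit_ge by (simp add: d_def)
  then obtain w where w: "digit w = d" "w \<noteq> [] \<longrightarrow> hd w \<noteq> 0" "length w \<le> Suc n"
    using exists_word_with_digits by blast
  have "0 \<notin> X" using sub by (auto simp: positions_def)
  then have low: "low_val w t = n mod 2^t + of_bool (t \<in> X) * 2^t" for t
    by (intro low_val_of_digit_carries) (simp add: w(1) carry_eq)
  have "word_val w = n"
    using word_val_eq_low_val[OF w(3)] low[of "Suc n"] big[of "Suc n"] by simp
  moreover have "\<forall>x\<in>set w. x \<le> 2"
    using set_word_le[of w 2] w(1) \<open>\<And>j. d j \<le> 2\<close> by simp
  ultimately have "w \<in> hyperbinary n"
    using w(2) by (simp add: hyperbinary_def)
  moreover have "carries w = X" using low by (rule carries_eqI)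
  ultimately show ?thesis by blast
qed

section \<open>Arcs delete one carry\<close>

definition bit_label :: "nat \<Rightarrow> nat \<Rightarrow> arc_label" where
  "bit_label n i = (if bit n i then Single else Double)"

text \<open>The rewriting a2 \<rightarrow> (a+1)0 behind the arcs, seen on the digits at positions Suc k and k.\<close>

definition digit_move :: "nat list \<Rightarrow> nat list \<Rightarrow> nat \<Rightarrow> bool" where
  "digit_move u v k \<longleftrightarrow> digit u k = 2 \<and> digit v k = 0 \<and> digit u (Suc k) \<le> 1 \<and>
     digit v (Suc k) = Suc (digit u (Suc k)) \<and> (\<forall>j. j \<noteq> k \<and> j \<noteq> Suc k \<longrightarrow> digit u j = digit v j)"

lemma digit_infix:
  "digit (x @ a # b # y) j =
    (if j < length y then digit y j else if j = length y then b
     else if j = Suc (length y) then a else digit x (j - Suc (Suc (length y))))"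
  using digit_append[of x "a # b # y" j] digit_append[of "[a, b]" y j]
  by (auto simp: digit_def nth_append)

lemma digit_move_infix: "a \<le> 1 \<Longrightarrow> digit_move (x @ a # 2 # y) (x @ Suc a # 0 # y) (length y)"
  unfolding digit_move_def by (simp add: digit_infix)

lemma arcA_hyperbinary: "arcA n l u v \<Longrightarrow> u \<in> hyperbinary n \<and> v \<in> hyperbinary n"
  by (simp add: arcA_def)

lemma arcA_digit_move:
  assumes "arcA n l u v"
  shows "\<exists>k. digit_move u v k \<and> l = (if digit u (Suc k) = 0 then Single else Double)"
proof (cases l)
  case Single
  then consider x y where "u = x @ 0 # 2 # y" "v = x @ Suc 0 # 0 # y"
    | y where "u = 2 # y" "v = [] @ Suc 0 # 0 # y"
    using assms by (auto simp: arcA_def)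
  then show ?thesis
  proof cases
    case 1
    then show ?thesis
      using digit_move_infix[of 0 x y] Single by (auto simp: digit_infix)
  next
    case 2
    have "digit u = digit ([] @ 0 # 2 # y)" using 2 by (simp add: digit_Cons_0)
    moreover have "digit_move ([] @ 0 # 2 # y) v (length y)"
      using 2 digit_move_infix[of 0 "[]" y] by simp
    ultimately have "digit_move u v (length y)" by (simp add: digit_move_def)
    moreover have "digit u (Suc (length y)) = 0" using 2 by (simp add: digit_ge_length)
    ultimately show ?thesis using Single by auto
  qed
next
  case Double
  then obtain x y where "u = x @ 1 # 2 # y" "v = x @ Suc 1 # 0 # y"
    using assms by (auto simp: arcA_def)
  then show ?thesis
    using digit_move_infix[of 1 x y] Double by (auto simp: digit_infix)
qed

lemma digit_move_low_val:
  assumes "digit_move u v k"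
  shows "low_val u (Suc k) = low_val v (Suc k) + 2^Suc k"
    and "t \<noteq> Suc k \<Longrightarrow> low_val u t = low_val v t"
proof -
  have move: "digit u k = 2" "digit v k = 0" "digit v (Suc k) = Suc (digit u (Suc k))"
    and same: "\<And>j. j \<noteq> k \<Longrightarrow> j \<noteq> Suc k \<Longrightarrow> digit u j = digit v j"
    using assms unfolding digit_move_def by auto
  have below: "low_val u t = low_val v t" if "t \<le> k" for t
    using that same by (intro low_val_cong) auto
  show at: "low_val u (Suc k) = low_val v (Suc k) + 2^Suc k"
    using below[of k] move by (simp add: low_val_Suc)
  have above: "low_val u t = low_val v t" if "Suc (Suc k) \<le> t" for t
    using that
  proof (induction t rule: dec_induct)
    case base
    then show ?case using at move by (simp add: low_val_Suc algebra_simps)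
  next
    case (step t)
    then show ?case using same[of t] by (simp add: low_val_Suc)
  qed
  show "t \<noteq> Suc k \<Longrightarrow> low_val u t = low_val v t"
    using below above by (cases "t \<le> k") auto
qed

lemma digit_move_carries:
  assumes u: "u \<in> hyperbinary n" and v: "v \<in> hyperbinary n" and move: "digit_move u v k"
  shows "Suc k \<in> carries u" and "carries v = carries u - {Suc k}"
    and "digit u (Suc k) = 0 \<longleftrightarrow> bit n (Suc k)"
proof -
  have at: "low_val u (Suc k) = low_val v (Suc k) + 2^Suc k"
    by (rule digit_move_low_val(1)[OF move])
  show carry: "Suc k \<in> carries u" using at by (simp add: carries_def)
  have "low_val u (Suc k) + 2 \<le> 2 * 2^Suc k"
    by (rule low_val_bound[OF hyperbinaryD(1)[OF u]])
  then have "Suc k \<notin> carries v" using at by (simp add: carries_def)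
  moreover have "t \<in> carries v \<longleftrightarrow> t \<in> carries u" if "t \<noteq> Suc k" for t
    using digit_move_low_val(2)[OF move that] by (simp add: carries_def)
  ultimately show "carries v = carries u - {Suc k}"
    using carry by (intro set_eqI) (metis DiffD1 DiffD2 DiffI singletonD singletonI)
  have "digit u (Suc k) + 1 = of_bool (bit n (Suc k)) + 2 * of_bool (Suc (Suc k) \<in> carries u)"
    using digit_carries[OF u, of "Suc k"] carry by simp
  moreover have "digit u (Suc k) \<le> 1" using move by (simp add: digit_move_def)
  ultimately show "digit u (Suc k) = 0 \<longleftrightarrow> bit n (Suc k)"
    by (cases "bit n (Suc k)"; cases "Suc (Suc k) \<in> carries u") auto
qed

lemma word_split_at: "Suc p < length u \<Longrightarrow> u = take p u @ u ! p # u ! Suc p # drop (Suc (Suc p)) u"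
  by (metis Cons_nth_drop_Suc Suc_lessD append_take_drop_id)

lemma word_split_around:
  assumes "k < length u"
  shows "\<exists>x b y. length y = k \<and> (x \<noteq> [] \<longrightarrow> hd x = hd u) \<and>
    (u = x @ digit u (Suc k) # b # y \<or> x = [] \<and> digit u (Suc k) = 0 \<and> u = b # y)"
proof -
  define y where "y = drop (length u - k) u"
  have ly: "length y = k" using assms by (simp add: y_def)
  show ?thesis
  proof (cases "Suc k < length u")
    case True
    define p where "p = length u - Suc (Suc k)"
    define x c b where "x = take p u" and "c = u ! p" and "b = u ! Suc p"
    have "Suc p < length u" "Suc (Suc p) = length u - k" using True by (simp_all add: p_def)
    then have u_eq: "u = x @ c # b # y"
      unfolding x_def c_def b_def y_def by (metis word_split_at)
    then have "c = digit u (Suc k)" using ly by (simp add: digit_infix)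
    moreover have "x \<noteq> [] \<longrightarrow> hd x = hd u" using u_eq by (cases x) auto
    ultimately show ?thesis using u_eq ly by blast
  next
    case False
    then have len: "length u = Suc k" using assms by simp
    then have "u \<noteq> []" "tl u = y" by (auto simp: y_def drop_Suc)
    then have "u = hd u # y" by (metis list.collapse)
    moreover have "digit u (Suc k) = 0" using len by (simp add: digit_ge_length)
    ultimately show ?thesis using ly by blast
  qed
qed

text \<open>A digit move between words without leading zeros is one of the rewritings defining the
  arcs; the rewriting 2y \<rightarrow> 10y is the case where the move creates a new leading digit.\<close>

lemma digit_move_words:
  assumes u0: "u \<noteq> [] \<longrightarrow> hd u \<noteq> 0" and v0: "v \<noteq> [] \<longrightarrow> hd v \<noteq> 0"
    and move: "digit_move u v k"
  defines "a \<equiv> digit u (Suc k)"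
  shows "\<exists>x y. v = x @ Suc a # 0 # y \<and> (u = x @ a # 2 # y \<or> x = [] \<and> a = 0 \<and> u = 2 # y)"
proof -
  have k: "digit u k = 2" using move by (simp add: digit_move_def)
  have "k < length u"
  proof (rule ccontr)
    assume "\<not> k < length u"
    then have "digit u k = 0" by (simp add: digit_ge_length)
    with k show False by simp
  qed
  then obtain x b y where ly: "length y = k" and hx: "x \<noteq> [] \<longrightarrow> hd x = hd u"
    and alt: "u = x @ a # b # y \<or> x = [] \<and> a = 0 \<and> u = b # y"
    unfolding a_def by (blast dest: word_split_around)
  have x0: "x \<noteq> [] \<longrightarrow> hd x \<noteq> 0" using hx u0 alt by auto
  have ux: "digit u = digit (x @ a # b # y)"
    using alt by (auto simp: digit_Cons_0)
  then have "b = 2" using k ly by (simp add: digit_infix)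
  have "digit v = digit (x @ Suc a # 0 # y)"
  proof
    fix j
    have "digit v k = 0" "digit v (Suc k) = Suc a"
      and "j \<noteq> k \<Longrightarrow> j \<noteq> Suc k \<Longrightarrow> digit v j = digit u j"
      using move by (auto simp: digit_move_def a_def)
    then show "digit v j = digit (x @ Suc a # 0 # y) j"
      using ux ly by (cases "j = k \<or> j = Suc k") (auto simp: digit_infix)
  qed
  moreover have "x @ Suc a # 0 # y \<noteq> [] \<longrightarrow> hd (x @ Suc a # 0 # y) \<noteq> 0"
    using x0 by (cases x) auto
  ultimately have "v = x @ Suc a # 0 # y" using digit_inj[OF v0] by blast
  then show ?thesis using alt \<open>b = 2\<close> by blast
qed

lemma digit_move_if_carries:
  assumes u: "u \<in> hyperbinary n" and v: "v \<in> hyperbinary n"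
    and i: "Suc k \<in> carries u" and cv: "carries v = carries u - {Suc k}"
  shows "digit_move u v k"
  unfolding digit_move_def
proof (intro conjI allI impI)
  have du: "digit u j + of_bool (j \<in> carries u) = of_bool (bit n j) + 2 * of_bool (Suc j \<in> carries u)"
    and dv: "digit v j + of_bool (j \<in> carries v) = of_bool (bit n j) + 2 * of_bool (Suc j \<in> carries v)"
    and "digit u j \<le> 2" and "digit v j \<le> 2" for j
    using digit_carries[OF u] digit_carries[OF v] digit_le hyperbinaryD(1) u v by blast+
  have "digit u k + of_bool (k \<in> carries u) = of_bool (bit n k) + 2"
    and "digit v k + of_bool (k \<in> carries u) = of_bool (bit n k)"
    using du[of k] dv[of k] i cv by simp_all
  then show "digit u k = 2" "digit v k = 0" using \<open>digit u k \<le> 2\<close> by simp_all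
  have "digit u (Suc k) + 1 = of_bool (bit n (Suc k)) + 2 * of_bool (Suc (Suc k) \<in> carries u)"
    and "digit v (Suc k) = of_bool (bit n (Suc k)) + 2 * of_bool (Suc (Suc k) \<in> carries u)"
    using du[of "Suc k"] dv[of "Suc k"] i cv by simp_all
  then show "digit u (Suc k) \<le> 1" "digit v (Suc k) = Suc (digit u (Suc k))"
    using \<open>digit v (Suc k) \<le> 2\<close> by simp_all
  fix j assume "j \<noteq> k \<and> j \<noteq> Suc k"
  then have "j \<in> carries v \<longleftrightarrow> j \<in> carries u" "Suc j \<in> carries v \<longleftrightarrow> Suc j \<in> carries u"
    using cv by auto
  then show "digit u j = digit v j" using du[of j] dv[of j] by simp
qed

lemma arcA_exists:
  assumes u: "u \<in> hyperbinary n" and i: "i \<in> carries u" and X: "carry_closed n (carries u - {i})"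
  shows "\<exists>v. arcA n (bit_label n i) u v \<and> carries v = carries u - {i}"
proof -
  obtain v where v: "v \<in> hyperbinary n" and cv: "carries v = carries u - {i}"
    using exists_word_with_carries[OF X] by blast
  have "1 \<le> i" using carries_subset_positions[OF u] i positions_ge_1 by blast
  then obtain k where k: "i = Suc k" by (cases i) auto
  have move: "digit_move u v k" using digit_move_if_carries[OF u v] i cv k by simp
  obtain x y where v_eq: "v = x @ Suc (digit u i) # 0 # y"
    and u_eq: "u = x @ digit u i # 2 # y \<or> x = [] \<and> digit u i = 0 \<and> u = 2 # y"
    using digit_move_words[OF hyperbinaryD(2)[OF u] hyperbinaryD(2)[OF v] move] k by blast
  have "digit u i \<le> 1" using move k by (simp add: digit_move_def)
  have "arcA n (bit_label n i) u v"
  proof (cases "bit n i")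
    case True
    then have "digit u i = 0" using digit_move_carries(3)[OF u v move] k by simp
    then show ?thesis using True u v u_eq v_eq by (auto simp: arcA_def bit_label_def)
  next
    case False
    then have "digit u i = 1"
      using digit_move_carries(3)[OF u v move] k \<open>digit u i \<le> 1\<close> by simp
    then show ?thesis
      using False u v u_eq v_eq by (auto simp: arcA_def bit_label_def numeral_2_eq_2)
  qed
  with cv show ?thesis by blast
qed

theorem arcA_iff_carries:
  "arcA n l u v \<longleftrightarrow> u \<in> hyperbinary n \<and> v \<in> hyperbinary n \<and>
     (\<exists>i\<in>carries u. carries v = carries u - {i} \<and> l = bit_label n i)"
proof
  assume arc: "arcA n l u v"
  then have u: "u \<in> hyperbinary n" and v: "v \<in> hyperbinary n"
    using arcA_hyperbinary by blast+
  obtain k where move: "digit_move u v k"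
    and l: "l = (if digit u (Suc k) = 0 then Single else Double)"
    using arcA_digit_move[OF arc] by blast
  have "l = bit_label n (Suc k)"
    using l digit_move_carries(3)[OF u v move] by (simp add: bit_label_def)
  then show "u \<in> hyperbinary n \<and> v \<in> hyperbinary n \<and>
      (\<exists>i\<in>carries u. carries v = carries u - {i} \<and> l = bit_label n i)"
    using u v digit_move_carries(1,2)[OF u v move] by blast
next
  assume "u \<in> hyperbinary n \<and> v \<in> hyperbinary n \<and>
      (\<exists>i\<in>carries u. carries v = carries u - {i} \<and> l = bit_label n i)"
  then obtain i where u: "u \<in> hyperbinary n" and v: "v \<in> hyperbinary n" and i: "i \<in> carries u"
    and cv: "carries v = carries u - {i}" and l: "l = bit_label n i" by blast
  have "carry_closed n (carries u - {i})" using carry_closed_carries[OF v] cv by simp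
  then obtain v' where arc: "arcA n l u v'" and cv': "carries v' = carries u - {i}"
    using arcA_exists[OF u i] l by blast
  have "v' = v" using carries_inj[OF _ v] arcA_hyperbinary[OF arc] cv cv' by simp
  with arc show "arcA n l u v" by simp
qed

section \<open>The lattice of carry-closed sets\<close>

text \<open>forces (bit n) j i: every carry-closed set of n that contains j also contains i.\<close>

definition forces :: "(nat \<Rightarrow> bool) \<Rightarrow> nat \<Rightarrow> nat \<Rightarrow> bool" where
  "forces b j i \<longleftrightarrow> (i \<le> j \<and> (\<forall>t\<in>{i..<j}. b t)) \<or> (j \<le> i \<and> (\<forall>t\<in>{j..<i}. \<not> b t))"

definition principal_set :: "nat \<Rightarrow> nat \<Rightarrow> nat set" where
  "principal_set n j = {i. 1 \<le> i \<and> forces (bit n) j i}"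

definition removable :: "nat \<Rightarrow> nat set \<Rightarrow> nat \<Rightarrow> bool" where
  "removable n X i \<longleftrightarrow> i \<in> X \<and> carry_closed n (X - {i})"

lemma mod_pow2_eq_if_no_bits:
  assumes "i \<le> k" "\<forall>t\<in>{i..<k}. \<not> bit (n::nat) t"
  shows "n mod 2^k = n mod 2^i"
  using assms
proof (induction k rule: dec_induct)
  case (step k)
  have "\<not> bit n k" using step.prems step.hyps(1) by simp
  moreover have "n mod 2^k = n mod 2^i" using step.IH step.prems by simp
  ultimately show ?case using mod_Suc_bit[of n k] by simp
qed simp

lemma principal_set_subset_positions:
  assumes j: "j \<in> positions n" shows "principal_set n j \<subseteq> positions n"
proof
  fix i assume "i \<in> principal_set n j"
  then have i: "1 \<le> i" and "forces (bit n) j i" by (auto simp: principal_set_def)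
  have "2^j \<le> n" using j by (simp add: positions_def)
  have "2^i \<le> n"
  proof (cases "i \<le> j")
    case True
    then have "(2::nat)^i \<le> 2^j" by (rule power_increasing) simp
    with \<open>2^j \<le> n\<close> show ?thesis by linarith
  next
    case False
    then have "\<forall>t\<in>{j..<i}. \<not> bit n t" "j \<le> i"
      using \<open>forces (bit n) j i\<close> by (auto simp: forces_def)
    then have "n mod 2^i = n mod 2^j" by (rule mod_pow2_eq_if_no_bits[rotated])
    moreover have "n mod 2^j < 2^j" by simp
    ultimately show ?thesis using \<open>2^j \<le> n\<close> by (metis le_less_trans mod_less not_le)
  qed
  with i show "i \<in> positions n" by (simp add: positions_def)
qed

lemma mem_principal_set: "j \<in> positions n \<Longrightarrow> j \<in> principal_set n j"
  by (auto simp: principal_set_def forces_def positions_def)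

text \<open>Evenness is needed since position 0 is never a carry.\<close>

lemma carry_closed_principal_set:
  assumes ev: "even n" and j: "j \<in> positions n" shows "carry_closed n (principal_set n j)"
  unfolding carry_closed_def
proof (intro conjI allI impI)
  show "principal_set n j \<subseteq> positions n" by (rule principal_set_subset_positions[OF j])
next
  fix t assume "t \<in> principal_set n j \<and> \<not> bit n t"
  then have "1 \<le> t" "forces (bit n) j t" "\<not> bit n t" by (auto simp: principal_set_def)
  then have "forces (bit n) j (Suc t)"
    unfolding forces_def by (cases "t < j") (auto simp: less_Suc_eq)
  then show "Suc t \<in> principal_set n j" by (simp add: principal_set_def)
next
  fix t assume "Suc t \<in> principal_set n j \<and> bit n t"
  then have "forces (bit n) j (Suc t)" "bit n t" by (auto simp: principal_set_def)
  moreover from \<open>bit n t\<close> ev have "1 \<le> t" by (cases t) (auto simp: bit_0)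
  ultimately have "1 \<le> t \<and> forces (bit n) j t"
    unfolding forces_def by (cases "Suc t \<le> j") (auto simp: le_less Suc_le_eq)
  then show "t \<in> principal_set n j" by (simp add: principal_set_def)
qed

lemma principal_set_least:
  assumes X: "carry_closed n X" and "j \<in> X" shows "principal_set n j \<subseteq> X"
proof
  fix i assume "i \<in> principal_set n j"
  then have "forces (bit n) j i" by (simp add: principal_set_def)
  then consider "i \<le> j" "\<forall>t\<in>{i..<j}. bit n t" | "j \<le> i" "\<forall>t\<in>{j..<i}. \<not> bit n t"
    by (auto simp: forces_def)
  then show "i \<in> X"
  proof cases
    case 1
    from 1(1) show ?thesis
      by (induction rule: inc_induct) (use \<open>j \<in> X\<close> 1(2) carry_closedD(3)[OF X] in auto)
  next
    case 2
    from 2(1) show ?thesis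
      by (induction rule: dec_induct) (use \<open>j \<in> X\<close> 2(2) carry_closedD(2)[OF X] in auto)
  qed
qed

lemma removable_iff:
  assumes X: "carry_closed n X"
  shows "removable n X i \<longleftrightarrow>
    i \<in> X \<and> \<not> (\<exists>t. Suc t = i \<and> t \<in> X \<and> \<not> bit n t) \<and> \<not> (Suc i \<in> X \<and> bit n i)"
proof
  assume "removable n X i"
  then have "i \<in> X" and X': "carry_closed n (X - {i})" by (auto simp: removable_def)
  show "i \<in> X \<and> \<not> (\<exists>t. Suc t = i \<and> t \<in> X \<and> \<not> bit n t) \<and> \<not> (Suc i \<in> X \<and> bit n i)"
  proof (intro conjI notI)
    assume "\<exists>t. Suc t = i \<and> t \<in> X \<and> \<not> bit n t"
    then obtain t where "Suc t = i" "t \<in> X" "\<not> bit n t" by blast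
    then show False using carry_closedD(2)[OF X', of t] by auto
  next
    assume "Suc i \<in> X \<and> bit n i"
    then show False using carry_closedD(3)[OF X', of i] by auto
  qed fact
next
  assume rem: "i \<in> X \<and> \<not> (\<exists>t. Suc t = i \<and> t \<in> X \<and> \<not> bit n t) \<and> \<not> (Suc i \<in> X \<and> bit n i)"
  have "carry_closed n (X - {i})"
    unfolding carry_closed_def
  proof (intro conjI allI impI)
    show "X - {i} \<subseteq> positions n" using carry_closedD(1)[OF X] by blast
  next
    fix t assume "t \<in> X - {i} \<and> \<not> bit n t"
    then show "Suc t \<in> X - {i}" using carry_closedD(2)[OF X, of t] rem by auto
  next
    fix t assume "Suc t \<in> X - {i} \<and> bit n t"
    then show "t \<in> X - {i}" using carry_closedD(3)[OF X, of t] rem by auto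
  qed
  with rem show "removable n X i" by (simp add: removable_def)
qed

lemma removable_principal_set:
  assumes "even n" "j \<in> positions n" shows "removable n (principal_set n j) j"
  using removable_iff[OF carry_closed_principal_set[OF assms]] mem_principal_set[OF assms(2)]
  by (auto simp: principal_set_def forces_def)

lemma removable_principal_set_unique:
  assumes "even n" "j \<in> positions n" "removable n (principal_set n j) i" shows "i = j"
proof (rule ccontr)
  assume "i \<noteq> j"
  with assms have "principal_set n j \<subseteq> principal_set n j - {i}"
    by (intro principal_set_least) (auto simp: removable_def mem_principal_set)
  with assms(3) show False by (auto simp: removable_def)
qed

text \<open>Start at the least element of X - Y and climb through the set bits of n as far as X - Y
  allows; where the climb stops, the element can be removed.\<close>

lemma exists_removable:
  assumes X: "carry_closed n X" and Y: "carry_closed n Y" and "Y \<subset> X"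
  shows "\<exists>i\<in>X - Y. removable n X i"
proof -
  define D where "D = X - Y"
  have "finite D" unfolding D_def using carry_closedD(1)[OF X] finite_positions finite_subset by blast
  have "D \<noteq> {}" using \<open>Y \<subset> X\<close> unfolding D_def by blast
  define i0 where "i0 = Min D"
  have i0: "i0 \<in> D" and i0_min: "\<And>t. t \<in> D \<Longrightarrow> i0 \<le> t"
    unfolding i0_def using \<open>finite D\<close> \<open>D \<noteq> {}\<close> by auto
  have down: "t \<in> D" if "Suc t \<in> D" "t \<in> X" "\<not> bit n t" for t
    using carry_closedD(2)[OF Y, of t] that unfolding D_def by auto
  have up: "Suc t \<in> D" if "t \<in> D" "Suc t \<in> X" "bit n t" for t
    using carry_closedD(3)[OF Y, of t] that unfolding D_def by auto
  define R where "R = {j. i0 \<le> j \<and> {i0..j} \<subseteq> D \<and> (\<forall>t\<in>{i0..<j}. bit n t)}"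
  have "R \<subseteq> D" "i0 \<in> R" unfolding R_def using i0 by auto
  then have "finite R" using \<open>finite D\<close> finite_subset by blast
  define j where "j = Max R"
  have jR: "j \<in> R" unfolding j_def using \<open>finite R\<close> \<open>i0 \<in> R\<close> Max_in by blast
  have j_max: "\<And>t. t \<in> R \<Longrightarrow> t \<le> j" unfolding j_def using \<open>finite R\<close> by simp
  have jD: "j \<in> D" using jR \<open>R \<subseteq> D\<close> by blast
  have "\<not> (\<exists>t. Suc t = j \<and> t \<in> X \<and> \<not> bit n t)"
  proof
    assume "\<exists>t. Suc t = j \<and> t \<in> X \<and> \<not> bit n t"
    then obtain t where t: "Suc t = j" "t \<in> X" "\<not> bit n t" by blast
    then have "t \<in> D" using down jD by blast
    then show False using i0_min[of t] jR t unfolding R_def by auto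
  qed
  moreover have "\<not> (Suc j \<in> X \<and> bit n j)"
  proof
    assume "Suc j \<in> X \<and> bit n j"
    then have "Suc j \<in> R"
      using up[of j] jD jR unfolding R_def by (auto simp: le_Suc_eq less_Suc_eq)
    then show False using j_max by fastforce
  qed
  ultimately have "removable n X j"
    using removable_iff[OF X] jD unfolding D_def by blast
  then show ?thesis using jD unfolding D_def by blast
qed

lemma eq_principal_set_if_unique_removable:
  assumes X: "carry_closed n X" and ev: "even n" and i: "removable n X i"
    and unique: "\<And>i'. removable n X i' \<Longrightarrow> i' = i"
  shows "X = principal_set n i"
proof (rule ccontr)
  have "i \<in> X" using i by (simp add: removable_def)
  then have "i \<in> positions n" using carry_closedD(1)[OF X] by blast
  assume "X \<noteq> principal_set n i"
  with principal_set_least[OF X \<open>i \<in> X\<close>] obtain i' where "i' \<in> X - principal_set n i" "removable n X i'"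
    using exists_removable[OF X carry_closed_principal_set[OF ev \<open>i \<in> positions n\<close>]] by blast
  then show False using unique mem_principal_set[OF \<open>i \<in> positions n\<close>] by auto
qed

section \<open>Reachability and vertices with one successor\<close>

definition arc :: "nat \<Rightarrow> nat list \<Rightarrow> nat list \<Rightarrow> bool" where
  "arc n u v \<longleftrightarrow> (\<exists>l. arcA n l u v)"

definition one_successor :: "nat \<Rightarrow> nat list \<Rightarrow> bool" where
  "one_successor n u \<longleftrightarrow> (\<exists>!v. arc n u v)"

lemma arc_iff_removable:
  assumes "u \<in> hyperbinary n"
  shows "arc n u v \<longleftrightarrow>
    v \<in> hyperbinary n \<and> (\<exists>i. removable n (carries u) i \<and> carries v = carries u - {i})"
  using assms carry_closed_carries[of v n]
  unfolding arc_def arcA_iff_carries removable_def by auto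

lemma arc_hyperbinary: "arc n u v \<Longrightarrow> u \<in> hyperbinary n \<and> v \<in> hyperbinary n"
  by (auto simp: arc_def dest: arcA_hyperbinary)

lemma finite_carries: "u \<in> hyperbinary n \<Longrightarrow> finite (carries u)"
  using carries_subset_positions finite_positions finite_subset by blast

lemma reaches_imp_carries_subset:
  assumes "(arc n)\<^sup>*\<^sup>* u v" and "u \<in> hyperbinary n"
  shows "v \<in> hyperbinary n \<and> carries v \<subseteq> carries u"
  using assms(1)
proof (induction rule: rtranclp_induct)
  case (step v w)
  then show ?case
    using arc_iff_removable[of v n w] arc_hyperbinary[of n v w] by auto
qed (use assms(2) in simp)

lemma reaches_if_carries_subset:
  assumes "u \<in> hyperbinary n" "v \<in> hyperbinary n" "carries v \<subseteq> carries u"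
  shows "(arc n)\<^sup>*\<^sup>* u v"
  using assms
proof (induction "card (carries u - carries v)" arbitrary: u rule: less_induct)
  case less
  show ?case
  proof (cases "carries u = carries v")
    case True
    then show ?thesis using carries_inj less.prems by blast
  next
    case False
    with less.prems obtain i where i: "i \<in> carries u - carries v" and rem: "removable n (carries u) i"
      using exists_removable[OF carry_closed_carries carry_closed_carries] by blast
    then obtain u' where u': "u' \<in> hyperbinary n" "carries u' = carries u - {i}"
      using exists_word_with_carries[of n "carries u - {i}"] by (auto simp: removable_def)
    have "arc n u u'" using arc_iff_removable[OF less.prems(1)] rem u' by blast
    moreover have "(arc n)\<^sup>*\<^sup>* u' v"
    proof (rule less.hyps)
      have "finite (carries u - carries v)" using finite_carries[OF less.prems(1)] by simp
      then have "card ((carries u - carries v) - {i}) < card (carries u - carries v)"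
        by (rule card_Diff1_less) (use i in blast)
      moreover have "carries u' - carries v = (carries u - carries v) - {i}" using u'(2) by blast
      ultimately show "card (carries u' - carries v) < card (carries u - carries v)" by simp
    qed (use u' less.prems i in auto)
    ultimately show ?thesis by (rule converse_rtranclp_into_rtranclp)
  qed
qed

theorem reaches_iff_carries_subset:
  "u \<in> hyperbinary n \<Longrightarrow> v \<in> hyperbinary n \<Longrightarrow> (arc n)\<^sup>*\<^sup>* u v \<longleftrightarrow> carries v \<subseteq> carries u"
  using reaches_imp_carries_subset reaches_if_carries_subset by blast

lemma one_successor_iff:
  assumes u: "u \<in> hyperbinary n"
  shows "one_successor n u \<longleftrightarrow> (\<exists>!i. removable n (carries u) i)"
proof
  assume "one_successor n u"
  then obtain v where uv: "arc n u v" and unique: "\<And>w. arc n u w \<Longrightarrow> w = v"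
    unfolding one_successor_def by blast
  obtain i where v: "v \<in> hyperbinary n" and i: "removable n (carries u) i"
    and cv: "carries v = carries u - {i}"
    using uv arc_iff_removable[OF u] by blast
  show "\<exists>!i. removable n (carries u) i"
  proof (rule ex1I[of _ i])
    fix i' assume i': "removable n (carries u) i'"
    then obtain w where "w \<in> hyperbinary n" "carries w = carries u - {i'}"
      using exists_word_with_carries[of n "carries u - {i'}"] by (auto simp: removable_def)
    then have "arc n u w" using arc_iff_removable[OF u] i' by blast
    then have "carries u - {i'} = carries u - {i}"
      using unique \<open>carries w = carries u - {i'}\<close> cv by simp
    then show "i' = i" using i i' by (auto simp: removable_def)
  qed (rule i)
next
  assume "\<exists>!i. removable n (carries u) i"
  then obtain i where i: "removable n (carries u) i"
    and unique: "\<And>i'. removable n (carries u) i' \<Longrightarrow> i' = i" by (elim ex1E) blast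
  obtain v where v: "v \<in> hyperbinary n" "carries v = carries u - {i}"
    using i exists_word_with_carries[of n "carries u - {i}"] by (auto simp: removable_def)
  show "one_successor n u"
    unfolding one_successor_def
  proof (rule ex1I[of _ v])
    show "arc n u v" using arc_iff_removable[OF u] i v by blast
    fix w assume "arc n u w"
    then obtain i' where "w \<in> hyperbinary n" "removable n (carries u) i'"
      "carries w = carries u - {i'}"
      using arc_iff_removable[OF u] by blast
    then show "w = v" using unique carries_inj v by metis
  qed
qed

section \<open>Isomorphisms\<close>

definition A_iso_by :: "nat \<Rightarrow> nat \<Rightarrow> (nat list \<Rightarrow> nat list) \<Rightarrow> bool" where
  "A_iso_by m n \<phi> \<longleftrightarrow> bij_betw \<phi> (hyperbinary m) (hyperbinary n) \<and>
     (\<forall>l. \<forall>u\<in>hyperbinary m. \<forall>v\<in>hyperbinary m. arcA m l u v \<longleftrightarrow> arcA n l (\<phi> u) (\<phi> v))"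

lemma A_iso_iff_A_iso_by: "A_iso m n \<longleftrightarrow> (\<exists>\<phi>. A_iso_by m n \<phi>)"
  unfolding A_iso_def A_iso_by_def by simp

lemma A_iso_byD:
  assumes "A_iso_by m n \<phi>"
  shows "bij_betw \<phi> (hyperbinary m) (hyperbinary n)"
    and "u \<in> hyperbinary m \<Longrightarrow> v \<in> hyperbinary m \<Longrightarrow> arcA m l u v \<longleftrightarrow> arcA n l (\<phi> u) (\<phi> v)"
  using assms unfolding A_iso_by_def by auto

lemma A_iso_by_id: "A_iso_by n n id"
  unfolding A_iso_by_def by simp

lemma A_iso_by_inv:
  assumes iso: "A_iso_by m n \<phi>" shows "A_iso_by n m (inv_into (hyperbinary m) \<phi>)"
proof -
  let ?\<psi> = "inv_into (hyperbinary m) \<phi>"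
  note bij = A_iso_byD(1)[OF iso]
  have "\<phi> (?\<psi> x) = x" "?\<psi> x \<in> hyperbinary m" if "x \<in> hyperbinary n" for x
    using bij_betw_inv_into_right[OF bij that] bij_betw_apply[OF bij_betw_inv_into[OF bij] that] .
  then show ?thesis
    unfolding A_iso_by_def using bij_betw_inv_into[OF bij] A_iso_byD(2)[OF iso] by auto
qed

lemma A_iso_by_comp:
  assumes "A_iso_by m n \<phi>" "A_iso_by n k \<psi>" shows "A_iso_by m k (\<psi> \<circ> \<phi>)"
  using assms bij_betw_trans[OF A_iso_byD(1)[OF assms(1)] A_iso_byD(1)[OF assms(2)]]
    bij_betw_apply[OF A_iso_byD(1)[OF assms(1)]]
  unfolding A_iso_by_def by auto

lemma A_iso_sym: "A_iso m n \<Longrightarrow> A_iso n m"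
  unfolding A_iso_iff_A_iso_by using A_iso_by_inv by blast

lemma A_iso_trans: "A_iso m n \<Longrightarrow> A_iso n k \<Longrightarrow> A_iso m k"
  unfolding A_iso_iff_A_iso_by using A_iso_by_comp by blast

lemma A_iso_by_arc:
  assumes "A_iso_by m n \<phi>" "u \<in> hyperbinary m" "v \<in> hyperbinary m"
  shows "arc m u v \<longleftrightarrow> arc n (\<phi> u) (\<phi> v)"
  using A_iso_byD(2)[OF assms] by (simp add: arc_def)

lemma A_iso_by_reaches:
  assumes iso: "A_iso_by m n \<phi>" and u: "u \<in> hyperbinary m" and "(arc m)\<^sup>*\<^sup>* u v"
  shows "(arc n)\<^sup>*\<^sup>* (\<phi> u) (\<phi> v)"
  using assms(3)
proof (induction rule: rtranclp_induct)
  case (step v w)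
  then have "v \<in> hyperbinary m" "w \<in> hyperbinary m" using arc_hyperbinary by blast+
  with step show ?case using A_iso_by_arc[OF iso] by (meson rtranclp.rtrancl_into_rtrancl)
qed simp

lemma A_iso_by_reaches_iff:
  assumes iso: "A_iso_by m n \<phi>" and "u \<in> hyperbinary m" "v \<in> hyperbinary m"
  shows "(arc m)\<^sup>*\<^sup>* u v \<longleftrightarrow> (arc n)\<^sup>*\<^sup>* (\<phi> u) (\<phi> v)"
proof
  assume reach: "(arc n)\<^sup>*\<^sup>* (\<phi> u) (\<phi> v)"
  have "\<phi> u \<in> hyperbinary n" using A_iso_byD(1)[OF iso] assms(2) by (rule bij_betw_apply)
  from this reach have "(arc m)\<^sup>*\<^sup>* (inv_into (hyperbinary m) \<phi> (\<phi> u)) (inv_into (hyperbinary m) \<phi> (\<phi> v))"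
    by (rule A_iso_by_reaches[OF A_iso_by_inv[OF iso]])
  then show "(arc m)\<^sup>*\<^sup>* u v"
    using assms bij_betw_inv_into_left[OF A_iso_byD(1)[OF iso]] by simp
qed (rule A_iso_by_reaches[OF assms(1,2)])

lemma A_iso_by_one_successor:
  assumes iso: "A_iso_by m n \<phi>" and u: "u \<in> hyperbinary m" and "one_successor m u"
  shows "one_successor n (\<phi> u)"
proof -
  note bij = A_iso_byD(1)[OF iso]
  obtain v where uv: "arc m u v" and unique: "\<And>w. arc m u w \<Longrightarrow> w = v"
    using assms(3) unfolding one_successor_def by blast
  have v: "v \<in> hyperbinary m" using arc_hyperbinary[OF uv] by blast
  show ?thesis
    unfolding one_successor_def
  proof (rule ex1I[of _ "\<phi> v"])
    show "arc n (\<phi> u) (\<phi> v)" using uv A_iso_by_arc[OF iso u v] by simp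
    fix w assume "arc n (\<phi> u) w"
    moreover obtain w' where "w' \<in> hyperbinary m" "w = \<phi> w'"
      using arc_hyperbinary[OF \<open>arc n (\<phi> u) w\<close>] bij by (auto simp: bij_betw_def)
    ultimately show "w = \<phi> v" using A_iso_by_arc[OF iso u] unique by blast
  qed
qed

section \<open>The forcing order is a path\<close>

definition hasse_adj :: "(nat \<Rightarrow> bool) \<Rightarrow> nat \<Rightarrow> nat \<Rightarrow> nat \<Rightarrow> bool" where
  "hasse_adj b N i j \<longleftrightarrow> i \<noteq> j \<and> (forces b j i \<or> forces b i j) \<and>
     \<not> (\<exists>k\<in>{1..N}. k \<noteq> i \<and> k \<noteq> j \<and>
          ((forces b k i \<and> forces b j k) \<or> (forces b k j \<and> forces b i k)))"

lemma forces_Suc_left: "forces b (Suc i) i \<longleftrightarrow> b i"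
  unfolding forces_def by (auto simp: less_Suc_eq)

lemma forces_Suc_right: "forces b i (Suc i) \<longleftrightarrow> \<not> b i"
  unfolding forces_def by (auto simp: less_Suc_eq)

lemma hasse_adj_sym: "hasse_adj b N i j \<longleftrightarrow> hasse_adj b N j i"
  unfolding hasse_adj_def by blast

lemma not_forces_between:
  assumes "k \<noteq> i" "k \<noteq> Suc i"
  shows "\<not> (forces b k i \<and> forces b (Suc i) k)" "\<not> (forces b k (Suc i) \<and> forces b i k)"
  using assms unfolding forces_def
  by (cases "i \<le> k"; force simp: not_le Suc_le_eq)+

lemma hasse_adj_Suc: "hasse_adj b N i (Suc i)"
  unfolding hasse_adj_def
  using not_forces_between[of _ i b] forces_Suc_left[of b i] forces_Suc_right[of b i] by auto

lemma not_hasse_adj_far: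
  assumes "Suc i < j" "1 \<le> i" "j \<le> N"
  shows "\<not> hasse_adj b N i j"
proof
  assume adj: "hasse_adj b N i j"
  have k: "Suc i \<in> {1..N}" "Suc i \<noteq> i" "Suc i \<noteq> j" using assms by auto
  have "forces b j i \<or> forces b i j" using adj unfolding hasse_adj_def by blast
  then show False
  proof
    assume "forces b j i"
    then have "forces b (Suc i) i \<and> forces b j (Suc i)"
      using assms(1) unfolding forces_def by auto
    then show False using adj k unfolding hasse_adj_def by blast
  next
    assume "forces b i j"
    then have "forces b (Suc i) j \<and> forces b i (Suc i)"
      using assms(1) unfolding forces_def by auto
    then show False using adj k unfolding hasse_adj_def by blast
  qed
qed

theorem hasse_adj_iff:
  assumes "i \<in> {1..N}" "j \<in> {1..N}"
  shows "hasse_adj b N i j \<longleftrightarrow> j = Suc i \<or> i = Suc j"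
proof
  assume adj: "hasse_adj b N i j"
  then have "i \<noteq> j" by (simp add: hasse_adj_def)
  show "j = Suc i \<or> i = Suc j"
  proof (rule ccontr)
    assume "\<not> (j = Suc i \<or> i = Suc j)"
    with \<open>i \<noteq> j\<close> consider "Suc i < j" | "Suc j < i" by linarith
    then show False
      using adj assms not_hasse_adj_far[of i j N b] not_hasse_adj_far[of j i N b] hasse_adj_sym
      by cases auto
  qed
qed (use hasse_adj_Suc hasse_adj_sym in blast)

lemma hasse_adj_transfer:
  assumes p: "bij_betw p {1..N} {1..N}"
    and forces: "\<And>i j. i \<in> {1..N} \<Longrightarrow> j \<in> {1..N} \<Longrightarrow> forces b j i \<longleftrightarrow> forces c (p j) (p i)"
    and ij: "i \<in> {1..N}" "j \<in> {1..N}"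
  shows "hasse_adj b N i j \<longleftrightarrow> hasse_adj c N (p i) (p j)"
proof -
  have inj: "x = y \<longleftrightarrow> p x = p y" if "x \<in> {1..N}" "y \<in> {1..N}" for x y
    using p that by (metis bij_betw_imp_inj_on inj_on_eq_iff)
  have ex: "(\<exists>k\<in>{1..N}. P k) \<longleftrightarrow> (\<exists>k\<in>{1..N}. P (p k))" for P
  proof
    assume "\<exists>k\<in>{1..N}. P k"
    then obtain k where "k \<in> p ` {1..N}" "P k" using bij_betw_imp_surj_on[OF p] by blast
    then show "\<exists>k\<in>{1..N}. P (p k)" by blast
  qed (use bij_betw_apply[OF p] in blast)
  have between:
    "(\<exists>k\<in>{1..N}. k \<noteq> i \<and> k \<noteq> j \<and> (forces b k i \<and> forces b j k \<or> forces b k j \<and> forces b i k))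
     \<longleftrightarrow> (\<exists>k\<in>{1..N}. p k \<noteq> p i \<and> p k \<noteq> p j \<and>
          (forces c (p k) (p i) \<and> forces c (p j) (p k) \<or> forces c (p k) (p j) \<and> forces c (p i) (p k)))"
    using inj forces ij by (intro bex_cong) auto
  show ?thesis
    unfolding hasse_adj_def between
      ex[of "\<lambda>k. k \<noteq> p i \<and> k \<noteq> p j \<and> (forces c k (p i) \<and> forces c (p j) k \<or> forces c k (p j) \<and> forces c (p i) k)"]
    using inj[OF ij] forces[OF ij] forces[OF ij(2,1)] by simp
qed

lemma path_endo_fixing_1:
  assumes into: "\<And>i. i \<in> {1..N} \<Longrightarrow> s i \<in> {1..N}" and inj: "inj_on s {1..N}"
    and adj: "\<And>i. i \<in> {1..N} \<Longrightarrow> Suc i \<in> {1..N} \<Longrightarrow> s (Suc i) = Suc (s i) \<or> s i = Suc (s (Suc i))"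
    and "s 1 = 1"
  shows "\<forall>i\<in>{1..N}. s i = i"
proof -
  have "s k = k" if "1 \<le> k" "k \<le> i" "i \<le> N" for i k
    using that
  proof (induction i arbitrary: k)
    case (Suc i)
    show ?case
    proof (cases "k \<le> i")
      case False
      then have k: "k = Suc i" using Suc.prems by simp
      show ?thesis
      proof (cases "i = 0")
        case False
        then have si: "s i = i" using Suc by simp
        have "s (Suc i) \<noteq> i - 1"
        proof
          assume "s (Suc i) = i - 1"
          moreover have "s (Suc i) \<ge> 1" using into[of "Suc i"] Suc.prems k by simp
          ultimately have "s (i - 1) = s (Suc i)" using Suc.IH[of "i - 1"] Suc.prems by simp
          moreover have "i - 1 \<in> {1..N}" "Suc i \<in> {1..N}"
            using \<open>s (Suc i) \<ge> 1\<close> \<open>s (Suc i) = i - 1\<close> Suc.prems k by auto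
          ultimately have "i - 1 = Suc i" using inj by (meson inj_onD)
          then show False by simp
        qed
        then show ?thesis using adj[of i] si Suc.prems k False by auto
      qed (use \<open>s 1 = 1\<close> k in simp)
    qed (use Suc in simp)
  qed simp
  then show ?thesis by auto
qed

lemma path_automorphism_end:
  assumes p: "bij_betw s {1..N} {1..N}"
    and adj: "\<And>i j. i \<in> {1..N} \<Longrightarrow> j \<in> {1..N} \<Longrightarrow>
      (j = Suc i \<or> i = Suc j) \<longleftrightarrow> (s j = Suc (s i) \<or> s i = Suc (s j))"
    and "N \<noteq> 0"
  shows "s 1 = 1 \<or> s 1 = N"
proof (rule ccontr)
  assume "\<not> (s 1 = 1 \<or> s 1 = N)"
  moreover have "s 1 \<in> {1..N}" using \<open>N \<noteq> 0\<close> by (intro bij_betw_apply[OF p]) simp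
  ultimately have m: "1 < s 1" "s 1 < N" by auto
  then have "s 1 - 1 \<in> s ` {1..N}" "Suc (s 1) \<in> s ` {1..N}"
    using bij_betw_imp_surj_on[OF p] by auto
  then obtain a c where a: "a \<in> {1..N}" "s a = s 1 - 1" and c: "c \<in> {1..N}" "s c = Suc (s 1)"
    by (metis imageE)
  have "a = Suc 1" "c = Suc 1"
    using adj[of 1 a] adj[of 1 c] a c m by auto
  then show False using a c m by simp
qed

lemma path_automorphism:
  assumes p: "bij_betw s {1..N} {1..N}"
    and adj: "\<And>i j. i \<in> {1..N} \<Longrightarrow> j \<in> {1..N} \<Longrightarrow>
      (j = Suc i \<or> i = Suc j) \<longleftrightarrow> (s j = Suc (s i) \<or> s i = Suc (s j))"
  shows "(\<forall>i\<in>{1..N}. s i = i) \<or> (\<forall>i\<in>{1..N}. s i = Suc N - i)"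
proof (cases "N = 0")
  case False
  have into: "s i \<in> {1..N}" if "i \<in> {1..N}" for i using p that by (rule bij_betw_apply)
  have inj: "inj_on s {1..N}" using p by (rule bij_betw_imp_inj_on)
  have "s 1 = 1 \<or> s 1 = N" using path_automorphism_end[OF p adj False] by blast
  then show ?thesis
  proof
    assume "s 1 = 1"
    then show ?thesis
      using path_endo_fixing_1[OF into inj _] adj False by (metis atLeastAtMost_iff)
  next
    assume sN: "s 1 = N"
    define s' where "s' i = Suc N - s i" for i
    have into': "s' i \<in> {1..N}" if "i \<in> {1..N}" for i using into[OF that] by (auto simp: s'_def)
    have inj': "inj_on s' {1..N}"
    proof (rule inj_onI)
      fix x y assume xy: "x \<in> {1..N}" "y \<in> {1..N}" and "s' x = s' y"
      then have "Suc N - s x = Suc N - s y" by (simp add: s'_def)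
      moreover have "s x \<le> N" "s y \<le> N" using into[OF xy(1)] into[OF xy(2)] by auto
      ultimately have "s x = s y" by arith
      then show "x = y" using inj xy by (meson inj_onD)
    qed
    have adj': "s' (Suc i) = Suc (s' i) \<or> s' i = Suc (s' (Suc i))"
      if "i \<in> {1..N}" "Suc i \<in> {1..N}" for i
      using adj[OF that] into[OF that(1)] into[OF that(2)] by (auto simp: s'_def)
    have "s' 1 = 1" using sN False by (simp add: s'_def)
    from path_endo_fixing_1[OF into' inj' adj' this] have fixed: "\<forall>i\<in>{1..N}. s' i = i" .
    have "s i = Suc N - i" if "i \<in> {1..N}" for i
    proof -
      have "Suc N - s i = i" "s i \<le> N" using fixed into that by (auto simp: s'_def)
      then show ?thesis by arith
    qed
    then show ?thesis by blast
  qed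
qed simp

lemma reversed_forcing_odd_bits:
  assumes bits: "\<And>i. i \<in> {1..N} \<Longrightarrow> b i = c (Suc N - i)"
    and forces: "\<And>i j. i \<in> {1..N} \<Longrightarrow> j \<in> {1..N} \<Longrightarrow>
      forces b j i \<longleftrightarrow> forces c (Suc N - j) (Suc N - i)"
    and "c N" and i: "1 \<le> i" "i \<le> N"
  shows "b i \<longleftrightarrow> odd i"
proof -
  have alt: "b (Suc i) \<longleftrightarrow> \<not> b i" if "1 \<le> i" "i < N" for i
  proof -
    have ij: "i \<in> {1..N}" "Suc i \<in> {1..N}" and "Suc N - i = Suc (N - i)" using that by auto
    then have "b i \<longleftrightarrow> \<not> c (N - i)"
      using forces[OF ij] forces_Suc_left[of b i] forces_Suc_right[of c "N - i"] by simp
    then show ?thesis using bits[OF ij(2)] by simp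
  qed
  from i show ?thesis
  proof (induction i rule: dec_induct)
    case base
    show ?case using bits[of 1] \<open>c N\<close> i by auto
  next
    case (step i)
    then show ?case using alt[of i] i by simp
  qed
qed

text \<open>The bijection is the identity or the reversal of the path 1 - 2 - ... - N; the reversal
  forces alternating bits, which the set top bits make symmetric.\<close>

theorem forcing_iso_same_bits:
  assumes p: "bij_betw p {1..N} {1..N}"
    and bits: "\<And>i. i \<in> {1..N} \<Longrightarrow> b i = c (p i)"
    and forces: "\<And>i j. i \<in> {1..N} \<Longrightarrow> j \<in> {1..N} \<Longrightarrow> forces b j i \<longleftrightarrow> forces c (p j) (p i)"
    and top: "1 \<le> N \<Longrightarrow> b N" "1 \<le> N \<Longrightarrow> c N"
  shows "\<forall>i\<in>{1..N}. b i = c i"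
proof -
  have into: "p i \<in> {1..N}" if "i \<in> {1..N}" for i using p that by (rule bij_betw_apply)
  have "(j = Suc i \<or> i = Suc j) \<longleftrightarrow> (p j = Suc (p i) \<or> p i = Suc (p j))"
    if "i \<in> {1..N}" "j \<in> {1..N}" for i j
    using hasse_adj_transfer[OF p forces that] hasse_adj_iff[OF that] hasse_adj_iff[OF into into] that
    by blast
  then consider "\<forall>i\<in>{1..N}. p i = i" | "\<forall>i\<in>{1..N}. p i = Suc N - i"
    using path_automorphism[OF p] by blast
  then show ?thesis
  proof cases
    case 1
    then show ?thesis using bits by simp
  next
    case rev: 2
    have odd_bits: "b i \<longleftrightarrow> odd i" if "1 \<le> i" "i \<le> N" for i
      by (rule reversed_forcing_odd_bits[where N = N and b = b and c = c])
        (use that rev bits forces top(2) in auto)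
    show ?thesis
    proof
      fix i assume i: "i \<in> {1..N}"
      then have j: "Suc N - i \<in> {1..N}" by auto
      then have "p (Suc N - i) = i" using bspec[OF rev j] i by auto
      then have "c i = b (Suc N - i)" using bits[OF j] by simp
      also have "\<dots> = odd (Suc N - i)" using odd_bits j by auto
      also have "\<dots> = odd i" using odd_bits[of N] top(1) i by auto
      also have "\<dots> = b i" using odd_bits i by auto
      finally show "b i = c i" by simp
    qed
  qed
qed

section \<open>Isomorphic graphs of even numbers\<close>

definition principal_word :: "nat \<Rightarrow> nat \<Rightarrow> nat list" where
  "principal_word n i = (THE u. u \<in> hyperbinary n \<and> carries u = principal_set n i)"

lemma principal_word:
  assumes "even n" "i \<in> positions n"
  shows "principal_word n i \<in> hyperbinary n" "carries (principal_word n i) = principal_set n i"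
proof -
  have "\<exists>!u. u \<in> hyperbinary n \<and> carries u = principal_set n i"
    using exists_word_with_carries[OF carry_closed_principal_set[OF assms]] carries_inj by blast
  from theI'[OF this] show "principal_word n i \<in> hyperbinary n" "carries (principal_word n i) = principal_set n i"
    unfolding principal_word_def by auto
qed

lemma principal_set_inj:
  assumes "even n" "i \<in> positions n" "j \<in> positions n" "principal_set n i = principal_set n j"
  shows "i = j"
  using removable_principal_set_unique[OF assms(1,2)] removable_principal_set[OF assms(1,3)] assms(4)
  by simp

lemma forces_iff_principal_set_subset:
  assumes "even n" "i \<in> positions n" "j \<in> positions n"
  shows "forces (bit n) j i \<longleftrightarrow> principal_set n i \<subseteq> principal_set n j"
  using mem_principal_set[OF assms(2)] principal_set_least[OF carry_closed_principal_set[OF assms(1,3)]]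
    positions_ge_1[OF assms(2)]
  by (auto simp: principal_set_def)

lemma one_successor_principal_word:
  assumes "even n" "i \<in> positions n" shows "one_successor n (principal_word n i)"
  using one_successor_iff[OF principal_word(1)[OF assms]] principal_word(2)[OF assms]
    removable_principal_set[OF assms] removable_principal_set_unique[OF assms] by auto

lemma one_successor_imp_principal_set:
  assumes ev: "even n" and u: "u \<in> hyperbinary n" and "one_successor n u"
  shows "\<exists>i\<in>positions n. carries u = principal_set n i"
proof -
  have "\<exists>!i. removable n (carries u) i" using assms(3) one_successor_iff[OF u] by blast
  then obtain i where i: "removable n (carries u) i"
    and unique: "\<And>i'. removable n (carries u) i' \<Longrightarrow> i' = i" by (elim ex1E) blast
  then have "carries u = principal_set n i"
    using eq_principal_set_if_unique_removable[OF carry_closed_carries[OF u] ev] by blast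
  moreover have "i \<in> positions n"
    using i carries_subset_positions[OF u] by (auto simp: removable_def)
  ultimately show ?thesis by blast
qed

lemma A_iso_by_principal_word:
  assumes "A_iso_by m n \<phi>" "even m" "even n" "i \<in> positions m"
  shows "\<exists>j\<in>positions n. carries (\<phi> (principal_word m i)) = principal_set n j"
  using assms one_successor_imp_principal_set A_iso_by_one_successor one_successor_principal_word
    principal_word(1) bij_betw_apply[OF A_iso_byD(1)[OF assms(1)]]
  by metis

text \<open>The unique arc out of a principal word deletes its generator, so its label is the bit
  there.\<close>

lemma A_iso_by_principal_bit:
  assumes iso: "A_iso_by m n \<phi>" and ev: "even m" "even n"
    and i: "i \<in> positions m" and j: "j \<in> positions n"
    and image: "carries (\<phi> (principal_word m i)) = principal_set n j"
  shows "bit m i \<longleftrightarrow> bit n j"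
proof -
  let ?u = "principal_word m i"
  have u: "?u \<in> hyperbinary m" and cu: "carries ?u = principal_set m i"
    using principal_word[OF ev(1) i] by auto
  obtain v where uv: "arcA m (bit_label m i) ?u v"
    using arcA_exists[OF u, of i] removable_principal_set[OF ev(1) i] cu by (auto simp: removable_def)
  then have "v \<in> hyperbinary m" by (simp add: arcA_hyperbinary)
  then have "arcA n (bit_label m i) (\<phi> ?u) (\<phi> v)" using uv A_iso_byD(2)[OF iso u] by blast
  then obtain i' where "carries (\<phi> v) = principal_set n j - {i'}" "i' \<in> principal_set n j"
    and label: "bit_label m i = bit_label n i'" and "\<phi> v \<in> hyperbinary n"
    unfolding arcA_iff_carries image by blast
  then have "removable n (principal_set n j) i'"
    using carry_closed_carries by (fastforce simp: removable_def)
  then have "i' = j" by (rule removable_principal_set_unique[OF ev(2) j])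
  with label show ?thesis by (simp add: bit_label_def split: if_splits)
qed

lemma A_iso_by_principal_word_onto:
  assumes iso: "A_iso_by m n \<phi>" and ev: "even m" "even n" and j: "j \<in> positions n"
  shows "\<exists>i\<in>positions m. \<phi> (principal_word m i) = principal_word n j"
proof -
  note bij = A_iso_byD(1)[OF iso]
  let ?\<psi> = "inv_into (hyperbinary m) \<phi>" and ?w = "principal_word n j"
  have w: "?w \<in> hyperbinary n" "\<phi> (?\<psi> ?w) = ?w" "?\<psi> ?w \<in> hyperbinary m"
    using principal_word(1)[OF ev(2) j] bij
    by (auto simp: bij_betw_inv_into_right bij_betw_apply[OF bij_betw_inv_into])
  then have "one_successor m (?\<psi> ?w)"
    using A_iso_by_one_successor[OF A_iso_by_inv[OF iso]] one_successor_principal_word[OF ev(2) j]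
    by blast
  then obtain i where i: "i \<in> positions m" "carries (?\<psi> ?w) = principal_set m i"
    using one_successor_imp_principal_set[OF ev(1) w(3)] by blast
  then have "?\<psi> ?w = principal_word m i" using carries_inj principal_word[OF ev(1)] w(3) by metis
  then show ?thesis using i(1) w(2) by metis
qed

text \<open>Reachability among principal words is the forcing order.\<close>

lemma A_iso_by_forces:
  assumes iso: "A_iso_by m n \<phi>" and ev: "even m" "even n"
    and ij: "i \<in> positions m" "j \<in> positions m" and ij': "i' \<in> positions n" "j' \<in> positions n"
    and image: "carries (\<phi> (principal_word m i)) = principal_set n i'"
      "carries (\<phi> (principal_word m j)) = principal_set n j'"
  shows "forces (bit m) j i \<longleftrightarrow> forces (bit n) j' i'"
proof -
  note pw = principal_word[OF ev(1) ij(1)] principal_word[OF ev(1) ij(2)]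
  have \<phi>pw: "\<phi> (principal_word m i) \<in> hyperbinary n" "\<phi> (principal_word m j) \<in> hyperbinary n"
    using pw bij_betw_apply[OF A_iso_byD(1)[OF iso]] by auto
  have "forces (bit m) j i \<longleftrightarrow> carries (principal_word m i) \<subseteq> carries (principal_word m j)"
    using forces_iff_principal_set_subset[OF ev(1) ij] pw by simp
  also have "\<dots> \<longleftrightarrow> (arc m)\<^sup>*\<^sup>* (principal_word m j) (principal_word m i)"
    using reaches_iff_carries_subset pw by simp
  also have "\<dots> \<longleftrightarrow> (arc n)\<^sup>*\<^sup>* (\<phi> (principal_word m j)) (\<phi> (principal_word m i))"
    using A_iso_by_reaches_iff[OF iso] pw by simp
  also have "\<dots> \<longleftrightarrow> principal_set n i' \<subseteq> principal_set n j'"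
    using reaches_iff_carries_subset \<phi>pw image by simp
  also have "\<dots> \<longleftrightarrow> forces (bit n) j' i'"
    using forces_iff_principal_set_subset[OF ev(2) ij'] by simp
  finally show ?thesis .
qed

text \<open>Principal words are exactly the vertices with one successor, so the isomorphism permutes
  them.\<close>

theorem even_A_iso_by_positions:
  assumes iso: "A_iso_by m n \<phi>" and ev: "even m" "even n"
  shows "\<exists>p. bij_betw p (positions m) (positions n) \<and> (\<forall>i\<in>positions m. bit m i \<longleftrightarrow> bit n (p i)) \<and>
    (\<forall>i\<in>positions m. \<forall>j\<in>positions m. forces (bit m) j i \<longleftrightarrow> forces (bit n) (p j) (p i))"
proof -
  note bij = A_iso_byD(1)[OF iso]
  define p where "p i = (SOME j. j \<in> positions n \<and> carries (\<phi> (principal_word m i)) = principal_set n j)" for i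
  have p: "p i \<in> positions n" "carries (\<phi> (principal_word m i)) = principal_set n (p i)"
    if "i \<in> positions m" for i
    using someI_ex[OF A_iso_by_principal_word[OF iso ev that, unfolded Bex_def]] by (auto simp: p_def)
  have "inj_on p (positions m)"
  proof
    fix i j assume ij: "i \<in> positions m" "j \<in> positions m" and "p i = p j"
    moreover have "principal_word m i \<in> hyperbinary m" "principal_word m j \<in> hyperbinary m"
      using principal_word(1)[OF ev(1)] ij by auto
    ultimately have "principal_word m i = principal_word m j"
      using p carries_inj bij_betw_apply[OF bij] bij_betw_imp_inj_on[OF bij] by (metis inj_onD)
    then show "i = j" using principal_word(2)[OF ev(1)] principal_set_inj[OF ev(1)] ij by metis
  qed
  moreover have "p ` positions m = positions n"
  proof
    show "positions n \<subseteq> p ` positions m"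
    proof
      fix j assume j: "j \<in> positions n"
      then obtain i where i: "i \<in> positions m" "\<phi> (principal_word m i) = principal_word n j"
        using A_iso_by_principal_word_onto[OF iso ev] by blast
      then have "principal_set n (p i) = principal_set n j"
        using p(2)[OF i(1)] principal_word(2)[OF ev(2) j] by simp
      then show "j \<in> p ` positions m" using principal_set_inj[OF ev(2) p(1)[OF i(1)] j] i by blast
    qed
  qed (use p in blast)
  moreover have "bit m i \<longleftrightarrow> bit n (p i)" if "i \<in> positions m" for i
    using A_iso_by_principal_bit[OF iso ev that p[OF that]] .
  moreover have "forces (bit m) j i \<longleftrightarrow> forces (bit n) (p j) (p i)"
    if "i \<in> positions m" "j \<in> positions m" for i j
    using A_iso_by_forces[OF iso ev that p(1)[OF that(1)] p(1)[OF that(2)] p(2)[OF that(1)] p(2)[OF that(2)]] .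
  ultimately show ?thesis unfolding bij_betw_def by blast
qed

definition top_position :: "nat \<Rightarrow> nat" where
  "top_position n = card (positions n)"

lemma positions_eq: "positions n = {1..top_position n}"
proof -
  have "positions n = {1..Max (insert 0 (positions n))}"
  proof (intro set_eqI iffI)
    fix i assume "i \<in> positions n"
    then show "i \<in> {1..Max (insert 0 (positions n))}"
      using finite_positions positions_ge_1 by auto
  next
    fix i assume i: "i \<in> {1..Max (insert 0 (positions n))}"
    then have "positions n \<noteq> {}" by auto
    then have "Max (positions n) \<in> positions n" using finite_positions by simp
    then have "2^Max (positions n) \<le> n" by (simp add: positions_def)
    moreover have "Max (insert 0 (positions n)) = Max (positions n)"
      using \<open>positions n \<noteq> {}\<close> finite_positions by simp
    then have "(2::nat)^i \<le> 2^Max (positions n)" using i by simp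
    ultimately have "2^i \<le> n" by linarith
    then show "i \<in> positions n" using i by (simp add: positions_def)
  qed
  then show ?thesis unfolding top_position_def by (metis card_atLeastAtMost diff_Suc_1)
qed

lemma bit_top_position:
  assumes "1 \<le> top_position n" shows "bit n (top_position n)"
proof -
  let ?N = "top_position n"
  have "?N \<in> positions n" "Suc ?N \<notin> positions n" using positions_eq[of n] assms by auto
  then have "2^?N \<le> n" "n < 2 * 2^?N" by (simp_all add: positions_def)
  then have "1 \<le> n div 2^?N" "n div 2^?N < 2"
    by (simp_all add: div_le_mono[of "2^?N" n "2^?N", simplified] div_less_iff_less_mult)
  then have "n div 2^?N = 1" by simp
  then show ?thesis by (simp add: bit_iff_odd)
qed

lemma not_bit_above_top_position:
  assumes "top_position n < i" shows "\<not> bit n i"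
proof -
  have "Suc (top_position n) \<notin> positions n" using positions_eq[of n] by auto
  then have "n < 2^Suc (top_position n)" by (simp add: positions_def)
  also have "\<dots> \<le> 2^i" using assms by (intro power_increasing) auto
  finally show ?thesis by (rule not_bit_ge)
qed

theorem even_A_iso_eq:
  assumes "A_iso m n" "even m" "even n" shows "m = n"
proof -
  obtain \<phi> where "A_iso_by m n \<phi>" using assms(1) A_iso_iff_A_iso_by by blast
  then obtain p where p: "bij_betw p (positions m) (positions n)"
    and bits: "\<forall>i\<in>positions m. bit m i \<longleftrightarrow> bit n (p i)"
    and forces: "\<forall>i\<in>positions m. \<forall>j\<in>positions m. forces (bit m) j i \<longleftrightarrow> forces (bit n) (p j) (p i)"
    using even_A_iso_by_positions assms(2,3) by blast
  define N where "N = top_position m"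
  have "top_position n = N"
    using bij_betw_same_card[OF p] unfolding N_def top_position_def by simp
  then have pos: "positions m = {1..N}" "positions n = {1..N}"
    using positions_eq N_def by auto
  have "1 \<le> N \<Longrightarrow> bit m N" "1 \<le> N \<Longrightarrow> bit n N"
    using bit_top_position[of m] bit_top_position[of n] N_def \<open>top_position n = N\<close> by simp_all
  then have "\<forall>i\<in>{1..N}. bit m i = bit n i"
    by (intro forcing_iso_same_bits[of p]) (use p bits forces pos in auto)
  moreover have "bit m i = bit n i" if "i = 0 \<or> N < i" for i
    using that not_bit_above_top_position N_def \<open>top_position n = N\<close> assms(2,3)
    by (auto simp: bit_0)
  ultimately have "bit m i = bit n i" for i
    by (metis atLeastAtMost_iff less_one not_le not_less_eq_eq)
  then show ?thesis by (simp add: bit_eq_iff)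
qed

section \<open>Appending the digit 1\<close>

lemma snoc_1_hyperbinary:
  assumes "u \<in> hyperbinary n" shows "u @ [1] \<in> hyperbinary (2 * n + 1)"
proof -
  note u = hyperbinaryD[OF assms]
  have "hd (u @ [1]) \<noteq> 0" using u(2) by (cases u) auto
  then show ?thesis using u(1,3) by (simp add: hyperbinary_def)
qed

lemma hyperbinary_odd:
  assumes w: "w \<in> hyperbinary (2 * n + 1)" shows "\<exists>u\<in>hyperbinary n. w = u @ [1]"
proof -
  have "w \<noteq> []" using hyperbinaryD(3)[OF w] by auto
  then obtain u d where wud: "w = u @ [d]" by (metis rev_exhaust)
  then have "d \<le> 2" "2 * word_val u + d = 2 * n + 1" using hyperbinaryD(1,3)[OF w] by auto
  then have "d = 1" "word_val u = n" by presburger+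
  moreover have "u \<noteq> [] \<longrightarrow> hd u \<noteq> 0" using hyperbinaryD(2)[OF w] wud by auto
  ultimately show ?thesis using hyperbinaryD(1)[OF w] wud by (auto simp: hyperbinary_def)
qed

lemma carries_snoc_1: "carries (u @ [1]) = Suc ` carries u"
proof (intro set_eqI)
  fix t
  show "t \<in> carries (u @ [1]) \<longleftrightarrow> t \<in> Suc ` carries u"
  proof (cases t)
    case (Suc i)
    have "(2 * a \<le> 1 + 2 * b) \<longleftrightarrow> (a \<le> (b::nat))" for a b by presburger
    then show ?thesis using Suc by (auto simp: carries_def low_val_snoc_Suc)
  qed (simp add: carries_def)
qed

lemma bit_label_odd: "bit_label (2 * n + 1) (Suc i) = bit_label n i"
  by (simp add: bit_label_def bit_Suc)

lemma A_iso_by_snoc_1: "A_iso_by n (2 * n + 1) (\<lambda>w. w @ [1])"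
  unfolding A_iso_by_def
proof (intro conjI allI ballI)
  show "bij_betw (\<lambda>w. w @ [1]) (hyperbinary n) (hyperbinary (2 * n + 1))"
    unfolding bij_betw_def
  proof
    show "(\<lambda>w. w @ [1]) ` hyperbinary n = hyperbinary (2 * n + 1)"
      using snoc_1_hyperbinary hyperbinary_odd by blast
  qed (simp add: inj_on_def)
next
  fix l u v assume u: "u \<in> hyperbinary n" and v: "v \<in> hyperbinary n"
  have shift_diff: "Suc ` X - {Suc i} = Suc ` (X - {i})" for X i by auto
  have "(\<exists>j\<in>carries (u @ [1]). carries (v @ [1]) = carries (u @ [1]) - {j} \<and> l = bit_label (2 * n + 1) j)
      \<longleftrightarrow> (\<exists>i\<in>carries u. carries v = carries u - {i} \<and> l = bit_label n i)" (is "?L \<longleftrightarrow> ?R")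
  proof
    assume ?L
    then obtain j where j: "j \<in> Suc ` carries u" "Suc ` carries v = Suc ` carries u - {j}"
      "l = bit_label (2 * n + 1) j"
      unfolding carries_snoc_1 by blast
    then obtain i where i: "i \<in> carries u" "j = Suc i" by blast
    then have "Suc ` carries v = Suc ` (carries u - {i})" using j(2) by (simp add: shift_diff)
    then have "carries v = carries u - {i}" by (simp add: inj_image_eq_iff)
    moreover have "l = bit_label n i" using j(3) i(2) bit_label_odd[of n i] by simp
    ultimately show ?R using i(1) by blast
  next
    assume ?R
    then obtain i where i: "i \<in> carries u" "carries v = carries u - {i}" "l = bit_label n i"
      by blast
    then have "Suc i \<in> carries (u @ [1])" "carries (v @ [1]) = carries (u @ [1]) - {Suc i}"
      unfolding carries_snoc_1 by (simp_all add: shift_diff)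
    moreover have "l = bit_label (2 * n + 1) (Suc i)" using i(3) bit_label_odd[of n i] by simp
    ultimately show ?L by blast
  qed
  then show "arcA n l u v \<longleftrightarrow> arcA (2 * n + 1) l (u @ [1]) (v @ [1])"
    unfolding arcA_iff_carries using u v snoc_1_hyperbinary by blast
qed

lemma A_iso_if_succ_eq_pow2_mult: "m + 1 = 2^t * (n + 1) \<Longrightarrow> A_iso n m"
proof (induction t arbitrary: m)
  case 0
  then show ?case using A_iso_by_id A_iso_iff_A_iso_by by auto
next
  case (Suc t)
  define k where "k = 2^t * (n + 1) - 1"
  have "k + 1 = 2^t * (n + 1)" by (simp add: k_def)
  moreover from this have "m = 2 * k + 1" using Suc.prems by simp
  ultimately show ?case
    using Suc.IH A_iso_by_snoc_1[of k] A_iso_iff_A_iso_by A_iso_trans by blast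
qed

lemma exists_even_odd_part: "\<exists>e t. even e \<and> (n::nat) + 1 = 2^t * (e + 1)"
proof (induction n rule: less_induct)
  case (less n)
  show ?case
  proof (cases "even n")
    case False
    then obtain k where k: "n = 2 * k + 1" by (rule oddE)
    with less.IH[of k] obtain e t where "even e" "k + 1 = 2^t * (e + 1)" by auto
    with k show ?thesis by (intro exI[of _ e] exI[of _ "Suc t"]) simp
  qed (intro exI[of _ n] exI[of _ "0::nat"], simp)
qed

lemma eq_pow2_mult_iff: "(m::nat) = 2^t * n + 2^t - 1 \<longleftrightarrow> m + 1 = 2^t * (n + 1)"
proof -
  have "2^t * (n + 1) = 2^t * n + (2::nat)^t" by (simp add: algebra_simps)
  moreover have "(1::nat) \<le> 2^t" by simp
  ultimately show ?thesis by arith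
qed

lemma pow2_mult_cases:
  assumes "(m::nat) + 1 = 2^a * x" "n + 1 = 2^b * x"
  shows "m + 1 = 2^(a - b) * (n + 1) \<or> n + 1 = 2^(b - a) * (m + 1)"
proof (cases "b \<le> a")
  case True
  then have "(2::nat)^a = 2^(a - b) * 2^b" by (simp flip: power_add)
  with assms show ?thesis by (simp add: mult.assoc)
next
  case False
  then have "(2::nat)^b = 2^(b - a) * 2^a" by (simp flip: power_add)
  with assms show ?thesis by (simp add: mult.assoc)
qed

theorem mainTheorem11:
  fixes m n :: nat
  shows "A_iso m n \<longleftrightarrow> (\<exists>t::nat. m = 2^t * n + 2^t - 1 \<or> n = 2^t * m + 2^t - 1)"
proof
  assume iso: "A_iso m n"
  obtain e a where e: "even e" "m + 1 = 2^a * (e + 1)" using exists_even_odd_part by blast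
  obtain f b where f: "even f" "n + 1 = 2^b * (f + 1)" using exists_even_odd_part by blast
  have "A_iso e f"
    using A_iso_if_succ_eq_pow2_mult[OF e(2)] A_iso_if_succ_eq_pow2_mult[OF f(2)] iso
    by (meson A_iso_sym A_iso_trans)
  then have "e = f" using e(1) f(1) by (rule even_A_iso_eq)
  then have "n + 1 = 2^b * (e + 1)" using f(2) by simp
  with e(2) have "m + 1 = 2^(a - b) * (n + 1) \<or> n + 1 = 2^(b - a) * (m + 1)"
    by (rule pow2_mult_cases)
  then show "\<exists>t. m = 2^t * n + 2^t - 1 \<or> n = 2^t * m + 2^t - 1"
    using eq_pow2_mult_iff by blast
next
  assume "\<exists>t. m = 2^t * n + 2^t - 1 \<or> n = 2^t * m + 2^t - 1"
  then show "A_iso m n"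
    using A_iso_if_succ_eq_pow2_mult A_iso_sym eq_pow2_mult_iff by blast
qed

end
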